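(* Under standing assumptions (A1)–(A4), define for each $\theta$ \[ x^*(\theta)=\arg\max_{x\in[\underline{x},\overline{x}]}\Big\{v(x)+x\Big(\theta-\frac{1-F(\theta)}{f(\theta)}\Big)\Big\},\qquad p(\theta)=u(x^*(\theta),\theta)-\int_{\underline{\theta}}^{\theta}x^a(x^*(z),z)\,dz. \] Then the mechanism that gives each type $\theta$ the allocation $x^*(\theta)$ with probability one at payment $p(\theta)$ is a revenue-maximizing incentive compatible and individually rational mechanism. Under it each type $\theta$ consumes $x^a(x^*(\theta),\theta)=\min\{x^e(\theta),x^*(\theta)\}$. The seller's optimal payoff (its expected revenue) is denoted $\pi(F)$.
   Context: Fix $\underline{\theta}<\overline{\theta}$ and $0<\underline{x}<\overline{x}$. The buyer's private type $\theta\in[\underline{\theta},\overline{\theta}]$ has CDF $F$ and density $f$. Let $v:[0,\overline{x}]\to\mathbb{R}$ be strictly concave and continuously differentiable with $v(0)=0$ (A1). For $x\in[\underline{x},\overline{x}]$, $u(x,\theta)=\max_{0\le x'\le x}[v(x')+\theta x']$ and $x^a(x,\theta)$ is the maximizer over $[0,x]$; $x^e(\theta)$ is the unique maximizer of $v(x')+\theta x'$ over $[0,\overline{x}]$, so $x^a(x,\theta)=\min\{x,x^e(\theta)\}$. Standing assumptions: (A2) $0<m\le f\le M$ for constants $m,M$, and $\theta-\frac{1-F(\theta)}{f(\theta)}$ strictly increasing; (A3) $0<x^e(\underline{\theta})\le\underline{x}$; (A4) $v(x^e(\theta))+\big(\theta-\frac{1-F(\theta)}{f(\theta)}\big)x^e(\theta)\ge0$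 for all $\theta$. A mechanism assigns to each type $\theta$ (measurably) a probability $q(\theta)\in[0,1]$ of trade, a probability distribution over allocations $x(\theta)\in[\underline{x},\overline{x}]$, and a payment $p(\theta)\in\mathbb{R}$. It is incentive compatible (IC) if $q(\theta)\mathbb{E}[u(x(\theta),\theta)]-p(\theta)\ge q(\theta')\mathbb{E}[u(x(\theta'),\theta)]-p(\theta')$ for all $\theta,\theta'$, and individually rational (IR) if $q(\theta)\mathbb{E}[u(x(\theta),\theta)]-p(\theta)\ge0$ for all $\theta$. The seller maximizes $\int_{\underline{\theta}}^{\overline{\theta}}p(\theta)f(\theta)\,d\theta$ over IC and IR mechanisms. *)

theory Defs
  imports "HOL-Probability.Probability"
begin

definition strictly_concave_on :: "real set \<Rightarrow> (real \<Rightarrow> real) \<Rightarrow> bool" where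
  "strictly_concave_on S g \<longleftrightarrow> convex S \<and>
     (\<forall>x\<in>S. \<forall>y\<in>S. \<forall>t. x \<noteq> y \<and> 0 < t \<and> t < 1 \<longrightarrow>
        g ((1 - t) * x + t * y) > (1 - t) * g x + t * g y)"

definition util :: "(real \<Rightarrow> real) \<Rightarrow> real \<Rightarrow> real \<Rightarrow> real" where
  "util v x \<theta> = (SUP x'\<in>{0..x}. v x' + \<theta> * x')"

definition xa :: "(real \<Rightarrow> real) \<Rightarrow> real \<Rightarrow> real \<Rightarrow> real" where
  "xa v x \<theta> = (THE x'. x' \<in> {0..x} \<and> (\<forall>y\<in>{0..x}. v y + \<theta> * y \<le> v x' + \<theta> * x'))"

definition xe :: "(real \<Rightarrow> real) \<Rightarrow> real \<Rightarrow> real \<Rightarrow> real" where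
  "xe v xhi \<theta> = xa v xhi \<theta>"

definition virt :: "(real \<Rightarrow> real) \<Rightarrow> (real \<Rightarrow> real) \<Rightarrow> real \<Rightarrow> real" where
  "virt F f \<theta> = \<theta> - (1 - F \<theta>) / f \<theta>"

definition xstar :: "(real \<Rightarrow> real) \<Rightarrow> (real \<Rightarrow> real) \<Rightarrow> (real \<Rightarrow> real) \<Rightarrow> real \<Rightarrow> real \<Rightarrow> real \<Rightarrow> real" where
  "xstar v F f xlo xhi \<theta> = (THE x. x \<in> {xlo..xhi} \<and>
      (\<forall>y\<in>{xlo..xhi}. v y + y * virt F f \<theta> \<le> v x + x * virt F f \<theta>))"

definition pstar :: "(real \<Rightarrow> real) \<Rightarrow> (real \<Rightarrow> real) \<Rightarrow> (real \<Rightarrow> real) \<Rightarrow> real \<Rightarrow> real \<Rightarrow> real \<Rightarrow> real \<Rightarrow> real" where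
  "pstar v F f xlo xhi tlo \<theta> = util v (xstar v F f xlo xhi \<theta>) \<theta>
      - integral {tlo..\<theta>} (\<lambda>z. xa v (xstar v F f xlo xhi z) z)"

definition lottery :: "real \<Rightarrow> real \<Rightarrow> real measure \<Rightarrow> bool" where
  "lottery xlo xhi L \<longleftrightarrow> prob_space L \<and> sets L = sets borel \<and> (AE x in L. x \<in> {xlo..xhi})"

definition exp_util :: "(real \<Rightarrow> real) \<Rightarrow> real measure \<Rightarrow> real \<Rightarrow> real" where
  "exp_util v L \<theta> = (\<integral>x. util v x \<theta> \<partial>L)"

definition mechanism :: "real \<Rightarrow> real \<Rightarrow> real \<Rightarrow> real \<Rightarrow> (real \<Rightarrow> real) \<Rightarrow> (real \<Rightarrow> real measure)
    \<Rightarrow> (real \<Rightarrow> real) \<Rightarrow> bool" where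
  "mechanism tlo thi xlo xhi q X p \<longleftrightarrow>
     (\<forall>\<theta>\<in>{tlo..thi}. q \<theta> \<in> {0..1} \<and> lottery xlo xhi (X \<theta>)) \<and>
     q \<in> borel_measurable (lebesgue_on {tlo..thi}) \<and>
     p \<in> borel_measurable (lebesgue_on {tlo..thi})"

definition IC :: "(real \<Rightarrow> real) \<Rightarrow> real \<Rightarrow> real \<Rightarrow> (real \<Rightarrow> real) \<Rightarrow> (real \<Rightarrow> real measure)
    \<Rightarrow> (real \<Rightarrow> real) \<Rightarrow> bool" where
  "IC v tlo thi q X p \<longleftrightarrow> (\<forall>\<theta>\<in>{tlo..thi}. \<forall>\<theta>'\<in>{tlo..thi}.
      q \<theta> * exp_util v (X \<theta>) \<theta> - p \<theta> \<ge> q \<theta>' * exp_util v (X \<theta>') \<theta> - p \<theta>')"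

definition IR :: "(real \<Rightarrow> real) \<Rightarrow> real \<Rightarrow> real \<Rightarrow> (real \<Rightarrow> real) \<Rightarrow> (real \<Rightarrow> real measure)
    \<Rightarrow> (real \<Rightarrow> real) \<Rightarrow> bool" where
  "IR v tlo thi q X p \<longleftrightarrow> (\<forall>\<theta>\<in>{tlo..thi}. q \<theta> * exp_util v (X \<theta>) \<theta> - p \<theta> \<ge> 0)"

definition revenue :: "(real \<Rightarrow> real) \<Rightarrow> real \<Rightarrow> real \<Rightarrow> (real \<Rightarrow> real) \<Rightarrow> real" where
  "revenue f tlo thi p = integral {tlo..thi} (\<lambda>\<theta>. p \<theta> * f \<theta>)"

end

theory Submission
  imports Defs
begin

text \<open>In an incentive compatible mechanism the buyer's indirect utility has increments squeezed
  between \<open>t - s\<close> times the expected consumption at \<open>s\<close> and at \<open>t\<close>, so it is the integral of a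
  monotone consumption schedule; no differentiability is needed. Integrating by parts against the
  type distribution writes revenue as expected virtual surplus \<open>v x + (\<theta> - (1 - F \<theta>) / f \<theta>) x\<close> at
  the consumed quantity \<open>x\<close>, minus the rent of the lowest type. Trading for sure at \<open>x\<^sup>*(\<theta>)\<close>
  maximises virtual surplus pointwise, (A4) makes the maximum nonnegative, and monotonicity of the
  virtual type makes \<open>x\<^sup>*\<close> monotone, which gives incentive compatibility of the proposed payments
  and leaves the lowest type no rent.\<close>

section \<open>Increments, indefinite integrals and integration by parts\<close>

lemma abs_integral_le_length:
  fixes h :: "real \<Rightarrow> real"
  assumes "s \<le> t" "h integrable_on {s..t}" "\<And>z. z \<in> {s..t} \<Longrightarrow> \<bar>h z\<bar> \<le> B"
  shows "\<bar>integral {s..t} h\<bar> \<le> B * (t - s)"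
proof -
  have "0 \<le> B" using assms(1) assms(3)[of s] by force
  moreover have "(h has_integral integral {s..t} h) (cbox s t)"
    using assms(2) by (simp add: cbox_interval integrable_integral)
  ultimately show ?thesis
    using has_integral_bound[where B = B and f = h and a = s and b = t] assms by (simp add: cbox_interval)
qed

lemma indefinite_integral_increment:
  fixes h :: "real \<Rightarrow> real"
  assumes "h integrable_on {a..b}" "a \<le> s" "s \<le> t" "t \<le> b"
  shows "integral {a..t} h - integral {a..s} h = integral {s..t} h"
  using Henstock_Kurzweil_Integration.integral_combine[of a s t h] assms
    integrable_on_subinterval[OF assms(1), of a t] by simp

lemma indefinite_integral_lipschitz:
  fixes h :: "real \<Rightarrow> real"
  assumes "h integrable_on {a..b}" "\<And>z. z \<in> {a..b} \<Longrightarrow> \<bar>h z\<bar> \<le> B" "a \<le> s" "s \<le> t" "t \<le> b"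
  shows "\<bar>integral {a..t} h - integral {a..s} h\<bar> \<le> B * (t - s)"
  unfolding indefinite_integral_increment[OF assms(1,3-5)]
  using assms by (intro abs_integral_le_length integrable_on_subinterval[OF assms(1)]) auto

lemma mono_on_integral_bounds:
  fixes g :: "real \<Rightarrow> real"
  assumes "mono_on {s..t} g" "s \<le> t"
  shows "g s * (t - s) \<le> integral {s..t} g" "integral {s..t} g \<le> g t * (t - s)"
proof -
  have g: "g integrable_on {s..t}" using assms(1) by (rule integrable_on_mono_on)
  have "integral {s..t} (\<lambda>_. g s) \<le> integral {s..t} g"
    using assms by (intro integral_le g) (auto simp: mono_on_def)
  moreover have "integral {s..t} g \<le> integral {s..t} (\<lambda>_. g t)"
    using assms by (intro integral_le g) (auto simp: mono_on_def)
  ultimately show "g s * (t - s) \<le> integral {s..t} g" "integral {s..t} g \<le> g t * (t - s)"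
    using assms(2) by (simp_all add: mult.commute)
qed

lemma borel_measurable_mono_on_lebesgue:
  fixes g :: "real \<Rightarrow> real"
  assumes "mono_on {a..b} g"
  shows "g \<in> borel_measurable (lebesgue_on {a..b})"
  using integrable_mono_on[OF assms] by (rule borel_measurable_integrable)

lemma borel_measurable_continuous_on_lebesgue:
  fixes g :: "real \<Rightarrow> real"
  assumes "continuous_on {a..b} g"
  shows "g \<in> borel_measurable (lebesgue_on {a..b})"
  using assms by (intro continuous_imp_measurable_on_sets_lebesgue) auto

lemma integrable_on_bounded_mult:
  fixes h g :: "real \<Rightarrow> real"
  assumes "h \<in> borel_measurable (lebesgue_on {a..b})" "\<And>z. z \<in> {a..b} \<Longrightarrow> \<bar>h z\<bar> \<le> B"
    and "g integrable_on {a..b}" "\<And>z. z \<in> {a..b} \<Longrightarrow> \<bar>g z\<bar> \<le> C"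
  shows "(\<lambda>z. h z * g z) integrable_on {a..b}"
proof -
  have "g absolutely_integrable_on {a..b}"
    using assms(3,4) by (intro absolutely_integrable_integrable_bound[where g = "\<lambda>_. C"]) auto
  moreover have "bounded (h ` {a..b})"
    unfolding bounded_iff by (rule exI[of _ B]) (use assms(2) in auto)
  ultimately have "(\<lambda>z. h z * g z) absolutely_integrable_on {a..b}"
    using assms(1) by (intro absolutely_integrable_bounded_measurable_product_real) auto
  then show ?thesis by (rule set_lebesgue_integral_eq_integral(1))
qed

lemma integrable_on_continuous_mult:
  fixes h g :: "real \<Rightarrow> real"
  assumes "continuous_on {a..b} h"
    and "g integrable_on {a..b}" "\<And>z. z \<in> {a..b} \<Longrightarrow> \<bar>g z\<bar> \<le> C"
  shows "(\<lambda>z. h z * g z) integrable_on {a..b}"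
proof -
  have "\<exists>B. \<forall>z\<in>{a..b}. \<bar>h z\<bar> \<le> B"
    using compact_imp_bounded[OF compact_continuous_image[OF assms(1) compact_Icc]]
    unfolding bounded_iff by auto
  then obtain B where "\<And>z. z \<in> {a..b} \<Longrightarrow> \<bar>h z\<bar> \<le> B" by blast
  then show ?thesis
    using assms by (intro integrable_on_bounded_mult borel_measurable_continuous_on_lebesgue)
qed

text \<open>Telescoping over \<open>n\<close> equal steps bounds \<open>\<bar>K b - K a\<bar>\<close> by \<open>O(1/n)\<close>.\<close>

lemma telescoping_increment_bound:
  fixes K h :: "real \<Rightarrow> real"
  assumes "a \<le> b" "0 < n"
    and incr: "\<And>s t. a \<le> s \<Longrightarrow> s \<le> t \<Longrightarrow> t \<le> b \<Longrightarrow>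
               \<bar>K t - K s\<bar> \<le> (h t - h s) * (t - s) + C * (t - s)^2"
  shows "\<bar>K b - K a\<bar> \<le> ((h b - h a) * (b - a) + C * (b - a)^2) / real n"
proof -
  define d where "d = (b - a) / real n"
  have d: "0 \<le> d" "real n * d = b - a" using assms(1,2) by (simp_all add: d_def)
  have "\<bar>K (a + real k * d) - K a\<bar> \<le> (h (a + real k * d) - h a) * d + C * real k * d^2"
    if "k \<le> n" for k
    using that
  proof (induction k)
    case (Suc k)
    let ?s = "a + real k * d" and ?t = "a + real (Suc k) * d"
    have "real (Suc k) * d \<le> real n * d" using Suc.prems d(1) by (intro mult_right_mono) auto
    then have "\<bar>K ?t - K ?s\<bar> \<le> (h ?t - h ?s) * d + C * d^2"
      using incr[of ?s ?t] d by (simp add: algebra_simps)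
    then show ?case using Suc by (simp add: algebra_simps)
  qed simp
  moreover have "a + real n * d = b" using d by simp
  moreover have "((h b - h a) * (b - a) + C * (b - a)^2) / real n = (h b - h a) * d + C * real n * d^2"
    using assms(2) by (simp add: d(2)[symmetric] power2_eq_square field_simps)
  ultimately show ?thesis by fastforce
qed

lemma eq_if_increments_bounded:
  fixes K h :: "real \<Rightarrow> real"
  assumes "a \<le> b"
    and "\<And>s t. a \<le> s \<Longrightarrow> s \<le> t \<Longrightarrow> t \<le> b \<Longrightarrow>
           \<bar>K t - K s\<bar> \<le> (h t - h s) * (t - s) + C * (t - s)^2"
  shows "K b = K a"
proof -
  let ?D = "(h b - h a) * (b - a) + C * (b - a)^2"
  have "\<forall>n\<ge>1. \<bar>K b - K a\<bar> \<le> ?D / real n"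
    using telescoping_increment_bound[OF assms(1) _ assms(2)] by simp
  then have "\<bar>K b - K a\<bar> \<le> 0"
    by (intro LIMSEQ_le_const[OF lim_const_over_n]) blast
  then show ?thesis by simp
qed

text \<open>An envelope theorem without differentiability: the increment bounds force \<open>g\<close> to be
  monotone, and then \<open>W - \<integral> g\<close> has increments at most \<open>(g t - g s) * (t - s)\<close>.\<close>

lemma
  fixes W g :: "real \<Rightarrow> real"
  assumes between: "\<And>s t. a \<le> s \<Longrightarrow> s \<le> t \<Longrightarrow> t \<le> b \<Longrightarrow>
                       g s * (t - s) \<le> W t - W s \<and> W t - W s \<le> g t * (t - s)"
  shows mono_on_if_increments_between: "mono_on {a..b} g"
    and increment_eq_integral_if_between:
      "\<And>s t. a \<le> s \<Longrightarrow> s \<le> t \<Longrightarrow> t \<le> b \<Longrightarrow> W t - W s = integral {s..t} g"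
proof -
  show mono: "mono_on {a..b} g"
  proof (rule mono_onI)
    fix s t assume st: "s \<in> {a..b}" "t \<in> {a..b}" "s \<le> t"
    show "g s \<le> g t"
    proof (cases "s = t")
      case False
      then have "0 < t - s" using st by simp
      moreover have "g s * (t - s) \<le> g t * (t - s)" using between[of s t] st by auto
      ultimately show ?thesis by simp
    qed simp
  qed
  show "W t - W s = integral {s..t} g" if st: "a \<le> s" "s \<le> t" "t \<le> b" for s t
  proof -
    have mono_sub: "mono_on {s'..t'} g" if "s \<le> s'" "t' \<le> t" for s' t'
      using mono st that by (auto simp: mono_on_def)
    have g: "g integrable_on {s..t}" using mono_sub[of s t] by (simp add: integrable_on_mono_on)
    define K where "K z = W z - integral {s..z} g" for z
    have "K t = K s"
    proof (rule eq_if_increments_bounded[where K = K and a = s and b = t and h = g and C = 0])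
      fix s' t' assume st': "s \<le> s'" "s' \<le> t'" "t' \<le> t"
      have "K t' - K s' = (W t' - W s') - integral {s'..t'} g"
        using indefinite_integral_increment[OF g st'] by (simp add: K_def)
      then show "\<bar>K t' - K s'\<bar> \<le> (g t' - g s') * (t' - s') + 0 * (t' - s')^2"
        using mono_on_integral_bounds[OF mono_sub[of s' t'] st'(2)] between[of s' t'] st st'
        by (simp add: left_diff_distrib abs_le_iff)
    qed (use st in simp)
    then show ?thesis by (simp add: K_def)
  qed
qed

text \<open>The product rule up to second order, stated for increments of integrals.\<close>

lemma integral_product_increment_bound:
  fixes G P g f :: "real \<Rightarrow> real"
  assumes "s \<le> t"
    and int: "(\<lambda>z. G z * f z) integrable_on {s..t}" "(\<lambda>z. P z * g z) integrable_on {s..t}"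
      "f integrable_on {s..t}" "g integrable_on {s..t}"
    and incr: "G t - G s = integral {s..t} g" "P s - P t = integral {s..t} f"
    and bnd: "\<And>z. z \<in> {s..t} \<Longrightarrow> \<bar>G z - G s\<bar> \<le> \<alpha>" "\<And>z. z \<in> {s..t} \<Longrightarrow> \<bar>P z - P t\<bar> \<le> \<beta>"
      "\<And>z. z \<in> {s..t} \<Longrightarrow> \<bar>f z\<bar> \<le> Cf" "\<And>z. z \<in> {s..t} \<Longrightarrow> \<bar>g z\<bar> \<le> Cg"
  shows "\<bar>integral {s..t} (\<lambda>z. G z * f z) - integral {s..t} (\<lambda>z. P z * g z) + (G t * P t - G s * P s)\<bar>
    \<le> (\<alpha> * Cf + \<beta> * Cg) * (t - s)"
proof -
  have nonneg: "0 \<le> \<alpha>" "0 \<le> \<beta>" using bnd(1)[of s] bnd(2)[of t] \<open>s \<le> t\<close> by auto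
  have int': "(\<lambda>z. (G z - G s) * f z) integrable_on {s..t}" "(\<lambda>z. (P z - P t) * g z) integrable_on {s..t}"
    using int by (simp_all add: left_diff_distrib integrable_diff integrable_on_mult_right)
  have "integral {s..t} (\<lambda>z. (G z - G s) * f z) = integral {s..t} (\<lambda>z. G z * f z) - G s * integral {s..t} f"
    "integral {s..t} (\<lambda>z. (P z - P t) * g z) = integral {s..t} (\<lambda>z. P z * g z) - P t * integral {s..t} g"
    using int by (simp_all add: left_diff_distrib Henstock_Kurzweil_Integration.integral_diff
        integrable_on_mult_right)
  then have "integral {s..t} (\<lambda>z. G z * f z) - integral {s..t} (\<lambda>z. P z * g z) + (G t * P t - G s * P s)
      = integral {s..t} (\<lambda>z. (G z - G s) * f z) - integral {s..t} (\<lambda>z. (P z - P t) * g z)"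
    using incr by (simp add: algebra_simps)
  also have "\<bar>\<dots>\<bar> \<le> \<alpha> * Cf * (t - s) + \<beta> * Cg * (t - s)"
    using int' bnd nonneg \<open>s \<le> t\<close>
    by (intro abs_triangle_ineq4[THEN order_trans] add_mono abs_integral_le_length)
      (auto simp: abs_mult intro!: mult_mono)
  finally show ?thesis by (simp add: algebra_simps)
qed

text \<open>Integration by parts for \<open>G = \<integral>\<^sub>a g\<close> against \<open>F = \<integral>\<^sub>a f\<close>, with neither \<open>g\<close> nor \<open>f\<close>
  continuous: \<open>K = \<integral>\<^sub>a (G f - g (F b - F)) + G (F b - F)\<close> has quadratically small increments.\<close>

lemma integration_by_parts_indefinite_integrals:
  fixes g f F :: "real \<Rightarrow> real"
  assumes ab: "a \<le> b"
    and g: "g integrable_on {a..b}" "\<And>z. z \<in> {a..b} \<Longrightarrow> \<bar>g z\<bar> \<le> Cg"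
    and f: "f integrable_on {a..b}" "\<And>z. z \<in> {a..b} \<Longrightarrow> \<bar>f z\<bar> \<le> Cf"
    and F: "\<And>z. z \<in> {a..b} \<Longrightarrow> F z = integral {a..z} f"
  shows "integral {a..b} (\<lambda>\<theta>. integral {a..\<theta>} g * f \<theta>) = integral {a..b} (\<lambda>z. g z * (F b - F z))"
proof -
  define G where "G \<theta> = integral {a..\<theta>} g" for \<theta>
  define P where "P z = F b - F z" for z
  have Gf: "(\<lambda>z. G z * f z) integrable_on {a..b}"
    unfolding G_def using indefinite_integral_continuous_1[OF g(1)] f
    by (rule integrable_on_continuous_mult)
  have "continuous_on {a..b} P"
    unfolding P_def using indefinite_integral_continuous_1[OF f(1)]
    by (intro continuous_intros) (auto intro: continuous_on_eq simp: F)
  then have gP: "(\<lambda>z. P z * g z) integrable_on {a..b}"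
    using g by (rule integrable_on_continuous_mult)
  define K where "K \<theta> = integral {a..\<theta>} (\<lambda>z. G z * f z) - integral {a..\<theta>} (\<lambda>z. P z * g z) + G \<theta> * P \<theta>"
    for \<theta>
  have "K b = K a"
  proof (rule eq_if_increments_bounded[where K = K and h = "\<lambda>_. 0" and C = "2 * Cg * Cf"])
    fix s t assume st: "a \<le> s" "s \<le> t" "t \<le> b"
    have "K t - K s = integral {s..t} (\<lambda>z. G z * f z) - integral {s..t} (\<lambda>z. P z * g z)
        + (G t * P t - G s * P s)"
      using indefinite_integral_increment[OF Gf st] indefinite_integral_increment[OF gP st]
      by (simp add: K_def algebra_simps)
    moreover have "\<bar>integral {s..t} (\<lambda>z. G z * f z) - integral {s..t} (\<lambda>z. P z * g z)
        + (G t * P t - G s * P s)\<bar> \<le> (Cg * (t - s) * Cf + Cf * (t - s) * Cg) * (t - s)"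
    proof (rule integral_product_increment_bound[OF st(2)])
      show "G t - G s = integral {s..t} g" "P s - P t = integral {s..t} f"
        using indefinite_integral_increment[OF g(1) st] indefinite_integral_increment[OF f(1) st] st
        by (simp_all add: G_def P_def F)
      fix z assume "z \<in> {s..t}"
      then show "\<bar>G z - G s\<bar> \<le> Cg * (t - s)" "\<bar>P z - P t\<bar> \<le> Cf * (t - s)"
        using indefinite_integral_lipschitz[OF g, of s z] indefinite_integral_lipschitz[OF f, of z t]
          g(2)[of a] f(2)[of a] st
        by (auto simp: G_def P_def F intro!: order_trans[OF _ mult_left_mono[of _ "t - s"]])
    qed (use st f g integrable_on_subinterval[OF Gf] integrable_on_subinterval[OF gP]
        integrable_on_subinterval[OF f(1)] integrable_on_subinterval[OF g(1)] in auto)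
    ultimately show "\<bar>K t - K s\<bar> \<le> (0 - 0) * (t - s) + 2 * Cg * Cf * (t - s)^2"
      by (simp add: power2_eq_square algebra_simps)
  qed (fact ab)
  then show ?thesis by (simp add: K_def G_def P_def mult.commute)
qed

section \<open>Lotteries and expected utility\<close>

lemma lottery_integrable:
  fixes h :: "real \<Rightarrow> real"
  assumes "lottery xlo xhi L" "h \<in> borel_measurable borel" "\<And>y. y \<in> {xlo..xhi} \<Longrightarrow> \<bar>h y\<bar> \<le> B"
  shows "integrable L h"
proof -
  have L: "prob_space L" "sets L = sets borel" "AE y in L. y \<in> {xlo..xhi}"
    using assms(1) unfolding lottery_def by auto
  have "h \<in> borel_measurable L" using assms(2) by (simp add: measurable_cong_sets[OF L(2) refl])
  moreover have "AE y in L. norm (h y) \<le> B" using L(3) by eventually_elim (simp add: assms(3))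
  ultimately show ?thesis
    using L(1) by (intro finite_measure.integrable_const_bound prob_space.finite_measure)
qed

lemma lottery_integral_le:
  fixes h :: "real \<Rightarrow> real"
  assumes "lottery xlo xhi L" "integrable L h" "\<And>y. y \<in> {xlo..xhi} \<Longrightarrow> h y \<le> c"
  shows "integral\<^sup>L L h \<le> c"
proof -
  have L: "prob_space L" "AE y in L. y \<in> {xlo..xhi}" using assms(1) unfolding lottery_def by auto
  have "AE y in L. h y \<le> c" using L(2) by eventually_elim (simp add: assms(3))
  then show ?thesis using prob_space.integral_le_const[OF L(1) assms(2)] by simp
qed

lemma lottery_integral_ge:
  fixes h :: "real \<Rightarrow> real"
  assumes "lottery xlo xhi L" "integrable L h" "\<And>y. y \<in> {xlo..xhi} \<Longrightarrow> c \<le> h y"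
  shows "c \<le> integral\<^sup>L L h"
proof -
  have L: "prob_space L" "AE y in L. y \<in> {xlo..xhi}" using assms(1) unfolding lottery_def by auto
  have "AE y in L. c \<le> h y" using L(2) by eventually_elim (simp add: assms(3))
  then show ?thesis using prob_space.integral_ge_const[OF L(1) assms(2)] by simp
qed

lemma Sup_eq_if_not_bdd_above:
  fixes X Y :: "real set"
  assumes "\<not> bdd_above X" "\<not> bdd_above Y"
  shows "Sup X = Sup Y"
proof -
  have "(\<lambda>z. \<forall>x\<in>X. x \<le> z) = (\<lambda>z. \<forall>x\<in>Y. x \<le> z)"
    using assms unfolding bdd_above_def by (intro ext) blast
  then show ?thesis unfolding Sup_real_def by simp
qed

text \<open>Off \<open>{0..x}\<close> nothing is known about \<open>g\<close>, so \<open>x \<mapsto> Sup (g ` {0..x})\<close> is only piecewise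
  monotone: constant for \<open>x < 0\<close>, increasing while \<open>g ` {0..x}\<close> is bounded above, and
  constant (the junk value of \<open>Sup\<close> on unbounded sets) afterwards.\<close>

lemma borel_measurable_Sup_image_atLeastAtMost:
  fixes g :: "real \<Rightarrow> real"
  shows "(\<lambda>x. Sup (g ` {0..x})) \<in> borel_measurable borel"
proof -
  define B where "B = {x. 0 \<le> x \<and> bdd_above (g ` {0..x})}"
  have down: "x \<in> B" if "y \<in> B" "0 \<le> x" "x \<le> y" for x y
    using that bdd_above_mono[of "g ` {0..y}" "g ` {0..x}"] image_mono[of "{0..x}" "{0..y}" g]
    by (auto simp: B_def)
  have "is_interval B"
    unfolding is_interval_1
  proof (intro ballI allI impI)
    fix p q x assume "p \<in> B" "q \<in> B" "p \<le> x \<and> x \<le> q"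
    then show "x \<in> B" using down[of q x] by (auto simp: B_def)
  qed
  moreover have "is_interval ({0..} - B)"
    unfolding is_interval_1
  proof (intro ballI allI impI)
    fix p q x assume "p \<in> {0..} - B" "q \<in> {0..} - B" "p \<le> x \<and> x \<le> q"
    then show "x \<in> {0..} - B" using down[of x p] by auto
  qed
  ultimately have intervals: "is_interval B" "is_interval ({0..} - B)" by auto
  have "mono_on {..<0} (\<lambda>x. Sup (g ` {0..x}))"
    by (rule mono_onI) simp
  moreover have "mono_on B (\<lambda>x. Sup (g ` {0..x}))"
  proof (rule mono_onI)
    fix x y assume "x \<in> B" "y \<in> B" "x \<le> y"
    then show "Sup (g ` {0..x}) \<le> Sup (g ` {0..y})"
      by (intro cSup_subset_mono image_mono) (auto simp: B_def)
  qed
  moreover have "mono_on ({0..} - B) (\<lambda>x. Sup (g ` {0..x}))"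
  proof (rule mono_onI)
    fix x y assume "x \<in> {0..} - B" "y \<in> {0..} - B"
    then have "Sup (g ` {0..x}) = Sup (g ` {0..y})"
      by (intro Sup_eq_if_not_bdd_above) (auto simp: B_def)
    then show "Sup (g ` {0..x}) \<le> Sup (g ` {0..y})" by simp
  qed
  moreover have "(\<Union>{{..<0}, B, {0..} - B}) = (UNIV :: real set)" by auto
  ultimately show ?thesis
    using intervals
    by (intro borel_measurable_piecewise_mono[of "{{..<0}, B, {0..} - B}"])
      (auto intro: real_interval_borel_measurable)
qed

lemma borel_measurable_util: "(\<lambda>x. util v x \<theta>) \<in> borel_measurable borel"
  unfolding util_def by (rule borel_measurable_Sup_image_atLeastAtMost)

lemma exp_util_return: "exp_util v (return borel y) \<theta> = util v y \<theta>"
  unfolding exp_util_def by (rule integral_return) (auto intro: borel_measurable_util)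

lemma lottery_return: "y \<in> {xlo..xhi} \<Longrightarrow> lottery xlo xhi (return borel y)"
  unfolding lottery_def by (auto simp: prob_space_return AE_return)

section \<open>Strictly concave valuations\<close>

lemma strictly_concave_onD:
  assumes "strictly_concave_on S g" "x \<in> S" "y \<in> S" "x \<noteq> y" "0 < t" "t < 1"
  shows "(1 - t) * g x + t * g y < g ((1 - t) * x + t * y)"
  using assms unfolding strictly_concave_on_def by blast

locale concave_valuation =
  fixes v :: "real \<Rightarrow> real" and xhi :: real
  assumes xhi_nonneg: "0 \<le> xhi"
    and strictly_concave: "strictly_concave_on {0..xhi} v"
    and continuous: "continuous_on {0..xhi} v"
begin

lemma argmax_strict:
  assumes "0 \<le> lo" "hi \<le> xhi" "y \<in> {lo..hi}" "\<forall>z\<in>{lo..hi}. v z + c * z \<le> v y + c * y"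
    and "z \<in> {lo..hi}" "z \<noteq> y"
  shows "v z + c * z < v y + c * y"
proof (rule ccontr)
  assume ge: "\<not> v z + c * z < v y + c * y"
  define m where "m = (1 - 1/2) * y + (1/2) * z"
  have "(1 - 1/2) * v y + (1/2) * v z < v m"
    unfolding m_def using assms by (intro strictly_concave_onD[OF strictly_concave]) auto
  moreover have "m \<in> {lo..hi}" using assms(3,5) by (auto simp: m_def)
  ultimately have "v y + c * y < v m + c * m" using ge by (simp add: m_def algebra_simps)
  then show False using assms(4) \<open>m \<in> {lo..hi}\<close> by force
qed

lemma ex1_argmax:
  assumes "0 \<le> lo" "lo \<le> hi" "hi \<le> xhi"
  shows "\<exists>!y. y \<in> {lo..hi} \<and> (\<forall>z\<in>{lo..hi}. v z + c * z \<le> v y + c * y)"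
proof -
  have "continuous_on {lo..hi} (\<lambda>z. v z + c * z)"
    using continuous assms by (intro continuous_intros) (auto elim: continuous_on_subset)
  then obtain y where y: "y \<in> {lo..hi}" "\<forall>z\<in>{lo..hi}. v z + c * z \<le> v y + c * y"
    using continuous_attains_sup[of "{lo..hi}" "\<lambda>z. v z + c * z"] assms by auto
  moreover have "y' = y" if y': "y' \<in> {lo..hi}" "\<forall>z\<in>{lo..hi}. v z + c * z \<le> v y' + c * y'" for y'
  proof (rule ccontr)
    assume "y' \<noteq> y"
    then have "v y' + c * y' < v y + c * y" using argmax_strict[OF assms(1,3) y y'(1)] by simp
    then show False using y'(2) y(1) by force
  qed
  ultimately show ?thesis by blast
qed

lemma objective_mono_below_argmax:
  assumes e: "e \<in> {0..xhi}" "\<forall>z\<in>{0..xhi}. v z + c * z \<le> v e + c * e"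
    and "0 \<le> y" "y \<le> x" "x \<le> e"
  shows "v y + c * y \<le> v x + c * x"
proof (cases "y = x \<or> x = e")
  case False
  then have yxe: "y < x" "x < e" using assms by auto
  define t where "t = (x - y) / (e - y)"
  have "t * (e - y) = x - y" using yxe by (simp add: t_def)
  moreover have "0 < t" "t < 1" using yxe by (auto simp: t_def field_simps)
  ultimately have t: "0 < t" "t < 1" "x = (1 - t) * y + t * e" by (simp_all add: algebra_simps)
  have "(1 - t) * v y + t * v e < v x"
    using strictly_concave_onD[OF strictly_concave, of y e t] t e(1) yxe assms(3) by auto
  moreover have "t * (v y + c * y) \<le> t * (v e + c * e)"
    using e assms(3) yxe t by (intro mult_left_mono) auto
  moreover have "c * x = (1 - t) * (c * y) + t * (c * e)"
    by (subst t(3)) (simp add: algebra_simps)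
  ultimately show ?thesis by (simp add: algebra_simps)
qed (use assms in auto)

lemma
  assumes "0 \<le> x" "x \<le> xhi"
  shows xa_mem: "xa v x \<theta> \<in> {0..x}"
    and xa_max: "\<And>y. y \<in> {0..x} \<Longrightarrow> v y + \<theta> * y \<le> v (xa v x \<theta>) + \<theta> * xa v x \<theta>"
  using theI'[OF ex1_argmax[OF order_refl assms, of \<theta>]] unfolding xa_def by auto

lemma xa_eqI:
  assumes "0 \<le> x" "x \<le> xhi" "y \<in> {0..x}" "\<forall>z\<in>{0..x}. v z + \<theta> * z \<le> v y + \<theta> * y"
  shows "xa v x \<theta> = y"
  unfolding xa_def using the1_equality[OF ex1_argmax[OF order_refl assms(1,2)]] assms(3,4) by auto

lemma xe_mem: "xe v xhi \<theta> \<in> {0..xhi}"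
  unfolding xe_def using xa_mem[OF xhi_nonneg order_refl] .

lemma xe_max: "y \<in> {0..xhi} \<Longrightarrow> v y + \<theta> * y \<le> v (xe v xhi \<theta>) + \<theta> * xe v xhi \<theta>"
  unfolding xe_def by (rule xa_max[OF xhi_nonneg order_refl])

lemma xa_eq_min_xe:
  assumes "0 \<le> x" "x \<le> xhi"
  shows "xa v x \<theta> = min x (xe v xhi \<theta>)"
proof (cases "xe v xhi \<theta> \<le> x")
  case True
  then show ?thesis using assms xe_mem xe_max by (auto intro!: xa_eqI)
next
  case False
  have "\<forall>z\<in>{0..xhi}. v z + \<theta> * z \<le> v (xe v xhi \<theta>) + \<theta> * xe v xhi \<theta>"
    using xe_max by blast
  then have "\<forall>z\<in>{0..x}. v z + \<theta> * z \<le> v x + \<theta> * x"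
    using objective_mono_below_argmax[OF xe_mem] False by auto
  then show ?thesis using False assms by (auto intro!: xa_eqI)
qed

lemma util_eq_xa:
  assumes "0 \<le> x" "x \<le> xhi"
  shows "util v x \<theta> = v (xa v x \<theta>) + \<theta> * xa v x \<theta>"
  unfolding util_def using xa_mem[OF assms] xa_max[OF assms] by (intro cSup_eq_maximum) auto

lemma util_eq:
  assumes "0 \<le> x" "x \<le> xhi"
  shows "util v x \<theta> = v (min x (xe v xhi \<theta>)) + \<theta> * min x (xe v xhi \<theta>)"
  using util_eq_xa[OF assms] xa_eq_min_xe[OF assms] by simp

lemma util_ge:
  assumes "0 \<le> x" "x \<le> xhi" "y \<in> {0..x}"
  shows "v y + \<theta> * y \<le> util v x \<theta>"
  using xa_max[OF assms] util_eq_xa[OF assms(1,2)] by simp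

text \<open>Envelope inequality: type \<open>t\<close> can always mimic the consumption \<open>min x (x\<^sup>e s)\<close> of type \<open>s\<close>.\<close>

lemma util_increment_ge:
  assumes "0 \<le> x" "x \<le> xhi"
  shows "(t - s) * min x (xe v xhi s) \<le> util v x t - util v x s"
  using util_ge[OF assms, of "min x (xe v xhi s)" t] util_eq[OF assms, of s] assms xe_mem
  by (simp add: algebra_simps)

lemma util_increment_eq_integral:
  assumes "0 \<le> x" "x \<le> xhi" "s \<le> t"
  shows "util v x t - util v x s = integral {s..t} (\<lambda>z. min x (xe v xhi z))"
  using util_increment_ge[OF assms(1,2)]
  by (intro increment_eq_integral_if_between[where a = s and b = t, OF _ order_refl assms(3) order_refl])
    (simp add: algebra_simps)

lemma xe_mono: "mono (xe v xhi)"
proof (rule monoI)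
  fix s t :: real assume "s \<le> t"
  have "mono_on {s..t} (\<lambda>z. min xhi (xe v xhi z))"
    using util_increment_ge[OF xhi_nonneg order_refl]
    by (intro mono_on_if_increments_between[where W = "util v xhi"]) (simp add: algebra_simps)
  then show "xe v xhi s \<le> xe v xhi t"
    using \<open>s \<le> t\<close> xe_mem by (auto dest: mono_onD[of _ _ s t] simp: min_absorb2)
qed

lemma util_mono:
  assumes "0 \<le> x" "x \<le> x'" "x' \<le> xhi" "\<theta> \<le> \<theta>'"
  shows "util v x \<theta> \<le> util v x' \<theta>'"
proof -
  have "util v x \<theta> \<le> util v x' \<theta>"
    using util_eq_xa[of x \<theta>] util_ge[of x' "xa v x \<theta>" \<theta>] xa_mem[of x \<theta>] assms by auto
  also have "\<dots> \<le> util v x' \<theta>'"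
  proof -
    have "0 \<le> (\<theta>' - \<theta>) * min x' (xe v xhi \<theta>)"
      using assms xe_mem[of \<theta>] by (intro mult_nonneg_nonneg) auto
    then show ?thesis using util_increment_ge[of x' \<theta>' \<theta>] assms by auto
  qed
  finally show ?thesis .
qed

lemma util_bounded:
  obtains B where "\<And>y \<theta>. y \<in> {0..xhi} \<Longrightarrow> \<theta> \<in> {a..b} \<Longrightarrow> \<bar>util v y \<theta>\<bar> \<le> B"
proof -
  have "\<exists>B. \<forall>y\<in>{0..xhi}. \<bar>v y\<bar> \<le> B"
    using compact_imp_bounded[OF compact_continuous_image[OF continuous compact_Icc]]
    unfolding bounded_iff by auto
  then obtain Bv where Bv: "\<And>y. y \<in> {0..xhi} \<Longrightarrow> \<bar>v y\<bar> \<le> Bv" by blast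
  have "\<bar>util v y \<theta>\<bar> \<le> Bv + (\<bar>a\<bar> + \<bar>b\<bar>) * xhi" if "y \<in> {0..xhi}" "\<theta> \<in> {a..b}" for y \<theta>
  proof -
    let ?m = "min y (xe v xhi \<theta>)"
    have m: "?m \<in> {0..xhi}" using that xe_mem[of \<theta>] by auto
    have "\<bar>\<theta> * ?m\<bar> \<le> (\<bar>a\<bar> + \<bar>b\<bar>) * xhi"
      unfolding abs_mult using that m by (intro mult_mono) auto
    then show ?thesis
      using util_eq[of y \<theta>] Bv[OF m] that abs_triangle_ineq[of "v ?m" "\<theta> * ?m"] by auto
  qed
  then show ?thesis using that by blast
qed

end

section \<open>The proposed mechanism\<close>

locale screening = concave_valuation +
  fixes tlo thi xlo M :: real and F f :: "real \<Rightarrow> real"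
  assumes types: "tlo \<le> thi"
    and allocs: "0 \<le> xlo" "xlo \<le> xhi"
    and density_integrable: "f integrable_on {tlo..thi}"
    and cdf: "\<And>\<theta>. \<theta> \<in> {tlo..thi} \<Longrightarrow> F \<theta> = integral {tlo..\<theta>} f"
    and cdf_top: "F thi = 1"
    and density_pos: "\<And>\<theta>. \<theta> \<in> {tlo..thi} \<Longrightarrow> 0 < f \<theta>"
    and density_le: "\<And>\<theta>. \<theta> \<in> {tlo..thi} \<Longrightarrow> f \<theta> \<le> M"
    and virt_strict_mono: "strict_mono_on {tlo..thi} (virt F f)"
    and virtual_surplus_xe_nonneg:
      "\<And>\<theta>. \<theta> \<in> {tlo..thi} \<Longrightarrow> 0 \<le> v (xe v xhi \<theta>) + virt F f \<theta> * xe v xhi \<theta>"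
begin

abbreviation xopt :: "real \<Rightarrow> real" where "xopt \<equiv> xstar v F f xlo xhi"

abbreviation popt :: "real \<Rightarrow> real" where "popt \<equiv> pstar v F f xlo xhi tlo"

definition consumption :: "real \<Rightarrow> real" where
  "consumption \<theta> = min (xe v xhi \<theta>) (xopt \<theta>)"

lemma density_nonneg: "\<theta> \<in> {tlo..thi} \<Longrightarrow> 0 \<le> f \<theta>"
  using density_pos less_imp_le by blast

lemma density_abs_le: "\<theta> \<in> {tlo..thi} \<Longrightarrow> \<bar>f \<theta>\<bar> \<le> M"
  using density_nonneg density_le by fastforce

lemma cdf_le_one:
  assumes "\<theta> \<in> {tlo..thi}"
  shows "F \<theta> \<le> 1"
proof -
  have "0 \<le> integral {\<theta>..thi} f"
    using assms density_nonneg
    by (intro Henstock_Kurzweil_Integration.integral_nonneg integrable_on_subinterval[OF density_integrable]) auto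
  moreover have "1 - F \<theta> = integral {\<theta>..thi} f"
    using indefinite_integral_increment[OF density_integrable, of \<theta> thi] assms types cdf[of thi] cdf_top
    by (simp add: cdf)
  ultimately show ?thesis by simp
qed

lemma cdf_continuous: "continuous_on {tlo..thi} F"
  using indefinite_integral_continuous_1[OF density_integrable] by (rule continuous_on_eq) (simp add: cdf)

lemma virt_le: "\<theta> \<in> {tlo..thi} \<Longrightarrow> virt F f \<theta> \<le> \<theta>"
  using cdf_le_one[of \<theta>] density_pos[of \<theta>] by (simp add: virt_def)

lemma
  shows xopt_mem: "xopt \<theta> \<in> {xlo..xhi}"
    and xopt_max: "\<And>y. y \<in> {xlo..xhi} \<Longrightarrow> v y + virt F f \<theta> * y \<le> v (xopt \<theta>) + virt F f \<theta> * xopt \<theta>"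
  using theI'[OF ex1_argmax[OF allocs order_refl, of "virt F f \<theta>"]] unfolding xstar_def
  by (auto simp: mult.commute)

lemma xopt_mono: "mono_on {tlo..thi} xopt"
proof (rule mono_onI)
  fix s t assume st: "s \<in> {tlo..thi}" "t \<in> {tlo..thi}" "s \<le> t"
  show "xopt s \<le> xopt t"
  proof (cases "s = t")
    case False
    then have "virt F f s < virt F f t" using st virt_strict_mono by (auto intro: strict_mono_onD)
    moreover have "0 \<le> (virt F f t - virt F f s) * (xopt t - xopt s)"
      using xopt_max[of "xopt t" s] xopt_max[of "xopt s" t] xopt_mem by (simp add: algebra_simps)
    ultimately show ?thesis by (simp add: zero_le_mult_iff)
  qed simp
qed

text \<open>Since \<open>virt F f \<theta> \<le> \<theta>\<close>, the seller never wants to exceed the buyer's bliss point.\<close>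

lemma xopt_le_xe:
  assumes "\<theta> \<in> {tlo..thi}" "xlo \<le> xe v xhi \<theta>"
  shows "xopt \<theta> \<le> xe v xhi \<theta>"
proof (rule ccontr)
  assume "\<not> ?thesis"
  then have gt: "xe v xhi \<theta> < xopt \<theta>" by simp
  have "v (xe v xhi \<theta>) + virt F f \<theta> * xe v xhi \<theta> \<le> v (xopt \<theta>) + virt F f \<theta> * xopt \<theta>"
    using xopt_max xe_mem assms(2) by auto
  moreover have "\<forall>z\<in>{0..xhi}. v z + \<theta> * z \<le> v (xe v xhi \<theta>) + \<theta> * xe v xhi \<theta>"
    using xe_max by blast
  then have "v (xopt \<theta>) + \<theta> * xopt \<theta> < v (xe v xhi \<theta>) + \<theta> * xe v xhi \<theta>"
    using argmax_strict[OF order_refl order_refl xe_mem[of \<theta>]] xopt_mem[of \<theta>] allocs gt by auto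
  moreover have "0 \<le> (\<theta> - virt F f \<theta>) * (xopt \<theta> - xe v xhi \<theta>)"
    using virt_le[OF assms(1)] gt by simp
  ultimately show False by (simp add: algebra_simps)
qed

lemma xa_xopt: "xa v (xopt \<theta>) \<theta> = consumption \<theta>"
  using xa_eq_min_xe[of "xopt \<theta>" \<theta>] xopt_mem[of \<theta>] allocs by (auto simp: consumption_def min.commute)

lemma consumption_mem: "consumption \<theta> \<in> {0..xhi}"
  using xe_mem[of \<theta>] xopt_mem[of \<theta>] allocs by (auto simp: consumption_def)

lemma consumption_mono: "mono_on {tlo..thi} consumption"
  using mono_onD[OF xopt_mono] monoD[OF xe_mono] unfolding consumption_def
  by (intro mono_onI min.mono) auto

lemma consumption_integrable: "consumption integrable_on {tlo..thi}"
  by (rule integrable_on_mono_on[OF consumption_mono])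

lemma util_xopt: "util v (xopt \<theta>) \<theta> = v (consumption \<theta>) + \<theta> * consumption \<theta>"
  using util_eq_xa[of "xopt \<theta>" \<theta>] xopt_mem[of \<theta>] allocs by (auto simp: xa_xopt)

lemma util_xopt_mono: "mono_on {tlo..thi} (\<lambda>\<theta>. util v (xopt \<theta>) \<theta>)"
proof (rule mono_onI)
  fix s t assume "s \<in> {tlo..thi}" "t \<in> {tlo..thi}" "s \<le> t"
  then show "util v (xopt s) s \<le> util v (xopt t) t"
    using mono_onD[OF xopt_mono] xopt_mem[of s] xopt_mem[of t] allocs by (intro util_mono) auto
qed

lemma virtual_surplus_consumption_max:
  assumes "\<theta> \<in> {tlo..thi}" "y \<in> {xlo..xhi}"
  shows "v (min y (xe v xhi \<theta>)) + virt F f \<theta> * min y (xe v xhi \<theta>)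
    \<le> v (consumption \<theta>) + virt F f \<theta> * consumption \<theta>"
proof (cases "xe v xhi \<theta> \<le> xlo")
  case True
  then show ?thesis using assms(2) xopt_mem[of \<theta>] by (simp add: consumption_def min_absorb1 min_absorb2)
next
  case False
  then have "consumption \<theta> = xopt \<theta>" using xopt_le_xe[OF assms(1)] by (simp add: consumption_def)
  moreover have "min y (xe v xhi \<theta>) \<in> {xlo..xhi}" using assms(2) xe_mem[of \<theta>] False by auto
  ultimately show ?thesis using xopt_max[of "min y (xe v xhi \<theta>)" \<theta>] by simp
qed

lemma virtual_surplus_consumption_nonneg:
  assumes "\<theta> \<in> {tlo..thi}"
  shows "0 \<le> v (consumption \<theta>) + virt F f \<theta> * consumption \<theta>"
proof (cases "xe v xhi \<theta> \<le> xopt \<theta>")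
  case True
  then show ?thesis using virtual_surplus_xe_nonneg[OF assms] by (simp add: consumption_def)
next
  case False
  then show ?thesis
    using virtual_surplus_xe_nonneg[OF assms] xopt_max[of "xe v xhi \<theta>" \<theta>] xopt_mem[of \<theta>] xe_mem[of \<theta>]
    by (simp add: consumption_def)
qed

lemma payoff_opt: "util v (xopt \<theta>) \<theta> - popt \<theta> = integral {tlo..\<theta>} consumption"
  by (simp add: pstar_def xa_xopt)

text \<open>Single crossing: a type \<open>t\<close> reporting \<open>s\<close> consumes \<open>min (xopt s) (x\<^sup>e z)\<close> along the envelope,
  which lies below \<open>consumption z\<close> for \<open>z \<ge> s\<close> and above it for \<open>z \<le> s\<close>.\<close>

lemma util_xopt_deviation:
  assumes "s \<in> {tlo..thi}" "t \<in> {tlo..thi}"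
  shows "util v (xopt s) t - util v (xopt s) s
    \<le> integral {tlo..t} consumption - integral {tlo..s} consumption"
proof -
  let ?g = "\<lambda>z. min (xopt s) (xe v xhi z)"
  have x: "0 \<le> xopt s" "xopt s \<le> xhi" using xopt_mem[of s] allocs by auto
  have g: "?g integrable_on {a..b}" for a b
    using monoD[OF xe_mono] by (intro integrable_on_mono_on mono_onI min.mono) auto
  have below: "?g z \<le> consumption z" if "s \<le> z" "z \<le> thi" for z
    using mono_onD[OF xopt_mono, of s z] assms that by (auto simp: consumption_def)
  have above: "consumption z \<le> ?g z" if "tlo \<le> z" "z \<le> s" for z
    using mono_onD[OF xopt_mono, of z s] assms that by (auto simp: consumption_def)
  show ?thesis
  proof (cases "s \<le> t")
    case True
    have "integral {s..t} ?g \<le> integral {s..t} consumption"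
      using below assms by (intro integral_le g integrable_on_subinterval[OF consumption_integrable]) auto
    then show ?thesis
      using util_increment_eq_integral[OF x True] True assms
        indefinite_integral_increment[OF consumption_integrable, of s t] by simp
  next
    case False
    have "integral {t..s} consumption \<le> integral {t..s} ?g"
      using above assms False
      by (intro integral_le g integrable_on_subinterval[OF consumption_integrable]) auto
    then show ?thesis
      using util_increment_eq_integral[OF x, of t s] False assms
        indefinite_integral_increment[OF consumption_integrable, of t s] by simp
  qed
qed

lemma opt_IC: "IC v tlo thi (\<lambda>_. 1) (\<lambda>\<theta>. return borel (xopt \<theta>)) popt"
  unfolding IC_def exp_util_return
proof (intro ballI)
  fix \<theta> \<theta>' assume "\<theta> \<in> {tlo..thi}" "\<theta>' \<in> {tlo..thi}"
  then show "1 * util v (xopt \<theta>') \<theta> - popt \<theta>' \<le> 1 * util v (xopt \<theta>) \<theta> - popt \<theta>"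
    using util_xopt_deviation[of \<theta>' \<theta>] payoff_opt[of \<theta>] payoff_opt[of \<theta>'] by simp
qed

lemma opt_IR: "IR v tlo thi (\<lambda>_. 1) (\<lambda>\<theta>. return borel (xopt \<theta>)) popt"
  unfolding IR_def exp_util_return using payoff_opt consumption_mem
  by (auto intro!: Henstock_Kurzweil_Integration.integral_nonneg
      integrable_on_subinterval[OF consumption_integrable])

lemma opt_mechanism: "mechanism tlo thi xlo xhi (\<lambda>_. 1) (\<lambda>\<theta>. return borel (xopt \<theta>)) popt"
proof -
  have "popt = (\<lambda>\<theta>. util v (xopt \<theta>) \<theta> - integral {tlo..\<theta>} consumption)"
    using payoff_opt by (auto simp: algebra_simps)
  moreover have "(\<lambda>\<theta>. util v (xopt \<theta>) \<theta> - integral {tlo..\<theta>} consumption)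
      \<in> borel_measurable (lebesgue_on {tlo..thi})"
    using borel_measurable_mono_on_lebesgue[OF util_xopt_mono]
      borel_measurable_continuous_on_lebesgue[OF indefinite_integral_continuous_1[OF consumption_integrable]]
    by (rule borel_measurable_diff)
  ultimately show ?thesis
    unfolding mechanism_def using xopt_mem by (auto intro: lottery_return)
qed

section \<open>Revenue of an arbitrary mechanism\<close>

definition indirect_utility ::
    "(real \<Rightarrow> real) \<Rightarrow> (real \<Rightarrow> real measure) \<Rightarrow> (real \<Rightarrow> real) \<Rightarrow> real \<Rightarrow> real" where
  "indirect_utility q X p \<theta> = q \<theta> * exp_util v (X \<theta>) \<theta> - p \<theta>"

definition expected_consumption :: "(real \<Rightarrow> real) \<Rightarrow> (real \<Rightarrow> real measure) \<Rightarrow> real \<Rightarrow> real" where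
  "expected_consumption q X \<theta> = q \<theta> * (\<integral>y. min y (xe v xhi \<theta>) \<partial>X \<theta>)"

text \<open>For the sure allocation \<open>x\<close> this is \<open>v m + virt F f \<theta> * m\<close> at the consumed quantity
  \<open>m = min x (x\<^sup>e \<theta>)\<close>.\<close>

definition virtual_surplus :: "(real \<Rightarrow> real) \<Rightarrow> (real \<Rightarrow> real measure) \<Rightarrow> real \<Rightarrow> real" where
  "virtual_surplus q X \<theta> = q \<theta> * exp_util v (X \<theta>) \<theta> - expected_consumption q X \<theta> * (1 - F \<theta>) / f \<theta>"

lemma integrable_util:
  assumes "lottery xlo xhi L"
  shows "integrable L (\<lambda>y. util v y \<theta>)"
proof -
  obtain B where B: "\<And>y \<theta>'. y \<in> {0..xhi} \<Longrightarrow> \<theta>' \<in> {\<theta>..\<theta>} \<Longrightarrow> \<bar>util v y \<theta>'\<bar> \<le> B"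
    using util_bounded[of \<theta> \<theta>] by blast
  show ?thesis
    using allocs B[of _ \<theta>] by (intro lottery_integrable[OF assms borel_measurable_util, where B = B]) auto
qed

lemma integrable_min_xe: "lottery xlo xhi L \<Longrightarrow> integrable L (\<lambda>y. min y (xe v xhi \<theta>))"
  using allocs xe_mem[of \<theta>] by (intro lottery_integrable[where B = xhi]) auto

lemma
  assumes "mechanism tlo thi xlo xhi q X p" "\<theta> \<in> {tlo..thi}"
  shows mechanism_lottery: "lottery xlo xhi (X \<theta>)"
    and mechanism_prob: "q \<theta> \<in> {0..1}"
  using assms unfolding mechanism_def by auto

lemma expected_consumption_mem:
  assumes "mechanism tlo thi xlo xhi q X p" "\<theta> \<in> {tlo..thi}"
  shows "expected_consumption q X \<theta> \<in> {0..xhi}"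
proof -
  note L = mechanism_lottery[OF assms] and q = mechanism_prob[OF assms]
  have "0 \<le> (\<integral>y. min y (xe v xhi \<theta>) \<partial>X \<theta>)" "(\<integral>y. min y (xe v xhi \<theta>) \<partial>X \<theta>) \<le> xhi"
    using allocs xe_mem[of \<theta>]
    by (auto intro!: lottery_integral_ge[OF L] lottery_integral_le[OF L] integrable_min_xe[OF L])
  moreover have "q \<theta> * (\<integral>y. min y (xe v xhi \<theta>) \<partial>X \<theta>) \<le> (\<integral>y. min y (xe v xhi \<theta>) \<partial>X \<theta>)"
    using q calculation by (intro mult_left_le_one_le) auto
  ultimately show ?thesis
    using q by (auto simp: expected_consumption_def)
qed

lemma expected_payoff_bounded:
  assumes "mechanism tlo thi xlo xhi q X p"
  obtains B where "\<And>\<theta>. \<theta> \<in> {tlo..thi} \<Longrightarrow> \<bar>q \<theta> * exp_util v (X \<theta>) \<theta>\<bar> \<le> B"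
proof -
  obtain B where B: "\<And>y \<theta>. y \<in> {0..xhi} \<Longrightarrow> \<theta> \<in> {tlo..thi} \<Longrightarrow> \<bar>util v y \<theta>\<bar> \<le> B"
    using util_bounded by blast
  have "\<bar>q \<theta> * exp_util v (X \<theta>) \<theta>\<bar> \<le> B" if "\<theta> \<in> {tlo..thi}" for \<theta>
  proof -
    note L = mechanism_lottery[OF assms that] and q = mechanism_prob[OF assms that]
    have "util v y \<theta> \<le> B" "- B \<le> util v y \<theta>" if "y \<in> {xlo..xhi}" for y
      using B[of y \<theta>] \<open>\<theta> \<in> {tlo..thi}\<close> that allocs by auto
    then have "exp_util v (X \<theta>) \<theta> \<le> B" "- B \<le> exp_util v (X \<theta>) \<theta>"
      unfolding exp_util_def
      by (auto intro!: lottery_integral_le[OF L] lottery_integral_ge[OF L] integrable_util[OF L])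
    then have "\<bar>exp_util v (X \<theta>) \<theta>\<bar> \<le> B" by simp
    moreover have "\<bar>q \<theta>\<bar> * \<bar>exp_util v (X \<theta>) \<theta>\<bar> \<le> \<bar>exp_util v (X \<theta>) \<theta>\<bar>"
      using q by (intro mult_left_le_one_le) auto
    ultimately show ?thesis by (simp add: abs_mult)
  qed
  then show ?thesis using that by blast
qed

text \<open>Type \<open>s\<close> can mimic type \<open>t\<close>: report \<open>t\<close>, then consume optimally.\<close>

lemma indirect_utility_increment_ge:
  assumes mech: "mechanism tlo thi xlo xhi q X p" and ic: "IC v tlo thi q X p"
    and st: "s \<in> {tlo..thi}" "t \<in> {tlo..thi}"
  shows "(s - t) * expected_consumption q X t \<le> indirect_utility q X p s - indirect_utility q X p t"
proof -
  note L = mechanism_lottery[OF mech st(2)] and q = mechanism_prob[OF mech st(2)]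
  have "0 \<le> (\<integral>y. util v y s - util v y t - (s - t) * min y (xe v xhi t) \<partial>X t)"
    using util_increment_ge allocs integrable_util[OF L] integrable_min_xe[OF L]
    by (intro lottery_integral_ge[OF L]) (auto simp: algebra_simps)
  then have "(s - t) * (\<integral>y. min y (xe v xhi t) \<partial>X t) \<le> exp_util v (X t) s - exp_util v (X t) t"
    using integrable_util[OF L] integrable_min_xe[OF L] by (simp add: exp_util_def)
  then have "q t * ((s - t) * (\<integral>y. min y (xe v xhi t) \<partial>X t))
      \<le> q t * (exp_util v (X t) s - exp_util v (X t) t)"
    using q by (intro mult_left_mono) auto
  moreover have "q t * exp_util v (X t) s - p t \<le> indirect_utility q X p s"
    using ic st unfolding IC_def indirect_utility_def by auto
  ultimately show ?thesis
    by (simp add: indirect_utility_def expected_consumption_def algebra_simps)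
qed

lemma
  assumes "mechanism tlo thi xlo xhi q X p" "IC v tlo thi q X p"
  shows expected_consumption_mono: "mono_on {tlo..thi} (expected_consumption q X)"
    and indirect_utility_eq_integral: "\<And>\<theta>. \<theta> \<in> {tlo..thi} \<Longrightarrow>
      indirect_utility q X p \<theta> = indirect_utility q X p tlo + integral {tlo..\<theta>} (expected_consumption q X)"
proof -
  have between: "expected_consumption q X s * (t - s) \<le> indirect_utility q X p t - indirect_utility q X p s
      \<and> indirect_utility q X p t - indirect_utility q X p s \<le> expected_consumption q X t * (t - s)"
    if "tlo \<le> s" "s \<le> t" "t \<le> thi" for s t
    using indirect_utility_increment_ge[OF assms, of t s] indirect_utility_increment_ge[OF assms, of s t] that
    by (auto simp: algebra_simps)
  show "mono_on {tlo..thi} (expected_consumption q X)"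
    by (rule mono_on_if_increments_between[OF between])
  show "indirect_utility q X p \<theta> = indirect_utility q X p tlo + integral {tlo..\<theta>} (expected_consumption q X)"
    if "\<theta> \<in> {tlo..thi}" for \<theta>
    using increment_eq_integral_if_between[where a = tlo and b = thi, OF between, of tlo \<theta>] that
    by simp
qed

lemma expected_consumption_integrable:
  assumes "mechanism tlo thi xlo xhi q X p" "IC v tlo thi q X p"
  shows "expected_consumption q X integrable_on {tlo..thi}"
  using expected_consumption_mono[OF assms] by (rule integrable_on_mono_on)

lemma expected_consumption_abs_le:
  assumes "mechanism tlo thi xlo xhi q X p" "\<theta> \<in> {tlo..thi}"
  shows "\<bar>expected_consumption q X \<theta>\<bar> \<le> xhi"
  using expected_consumption_mem[OF assms] by auto

lemma payment_density_integrable: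
  assumes mech: "mechanism tlo thi xlo xhi q X p" and ic: "IC v tlo thi q X p"
  shows "(\<lambda>\<theta>. p \<theta> * f \<theta>) integrable_on {tlo..thi}"
proof -
  obtain B where B: "\<And>\<theta>. \<theta> \<in> {tlo..thi} \<Longrightarrow> \<bar>q \<theta> * exp_util v (X \<theta>) \<theta>\<bar> \<le> B"
    using expected_payoff_bounded[OF mech] by blast
  have "\<bar>integral {tlo..\<theta>} (expected_consumption q X)\<bar> \<le> xhi * (thi - tlo)" if "\<theta> \<in> {tlo..thi}" for \<theta>
  proof -
    have "\<bar>integral {tlo..\<theta>} (expected_consumption q X)\<bar> \<le> xhi * (\<theta> - tlo)"
      using indefinite_integral_lipschitz[OF expected_consumption_integrable[OF mech ic]
          expected_consumption_abs_le[OF mech], of tlo \<theta>] that by simp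
    also have "\<dots> \<le> xhi * (thi - tlo)" using that xhi_nonneg by (intro mult_left_mono) auto
    finally show ?thesis .
  qed
  then have "\<bar>p \<theta>\<bar> \<le> B + \<bar>indirect_utility q X p tlo\<bar> + xhi * (thi - tlo)" if "\<theta> \<in> {tlo..thi}" for \<theta>
    using indirect_utility_eq_integral[OF mech ic that] B[OF that] that
    unfolding indirect_utility_def[of q X p \<theta>] by fastforce
  then show ?thesis
    using mech density_integrable density_abs_le unfolding mechanism_def
    by (intro integrable_on_bounded_mult) auto
qed

lemma expected_rent_has_integral:
  assumes g: "g integrable_on {tlo..thi}" "\<And>\<theta>. \<theta> \<in> {tlo..thi} \<Longrightarrow> \<bar>g \<theta>\<bar> \<le> C"
  shows "((\<lambda>\<theta>. integral {tlo..\<theta>} g * f \<theta> - g \<theta> * (1 - F \<theta>)) has_integral 0) {tlo..thi}"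
proof -
  have "continuous_on {tlo..thi} (\<lambda>\<theta>. 1 - F \<theta>)"
    using cdf_continuous by (intro continuous_intros)
  then have "((\<lambda>\<theta>. integral {tlo..\<theta>} g * f \<theta> - (1 - F \<theta>) * g \<theta>) has_integral
      integral {tlo..thi} (\<lambda>\<theta>. integral {tlo..\<theta>} g * f \<theta>)
      - integral {tlo..thi} (\<lambda>\<theta>. (1 - F \<theta>) * g \<theta>)) {tlo..thi}"
    using integrable_on_continuous_mult[OF indefinite_integral_continuous_1[OF g(1)]
        density_integrable density_abs_le] integrable_on_continuous_mult[OF _ g]
    by (intro has_integral_diff integrable_integral) auto
  moreover have "integral {tlo..thi} (\<lambda>\<theta>. integral {tlo..\<theta>} g * f \<theta>)
      = integral {tlo..thi} (\<lambda>\<theta>. g \<theta> * (1 - F \<theta>))"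
    using integration_by_parts_indefinite_integrals[OF types g density_integrable density_abs_le cdf]
    by (simp add: cdf_top)
  ultimately show ?thesis by (simp add: mult.commute)
qed

lemma revenue_has_integral:
  assumes mech: "mechanism tlo thi xlo xhi q X p" and ic: "IC v tlo thi q X p"
  shows "((\<lambda>\<theta>. virtual_surplus q X \<theta> * f \<theta>) has_integral
      revenue f tlo thi p + indirect_utility q X p tlo) {tlo..thi}"
proof -
  define g where "g = expected_consumption q X"
  define U0 where "U0 = indirect_utility q X p tlo"
  have "((\<lambda>\<theta>. p \<theta> * f \<theta> + U0 * f \<theta>) has_integral revenue f tlo thi p + U0) {tlo..thi}"
    using payment_density_integrable[OF mech ic]
      has_integral_mult_right[OF integrable_integral[OF density_integrable], of U0] cdf[of thi] types
    by (intro has_integral_add) (auto simp: revenue_def cdf_top)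
  then have "((\<lambda>\<theta>. p \<theta> * f \<theta> + U0 * f \<theta> + (integral {tlo..\<theta>} g * f \<theta> - g \<theta> * (1 - F \<theta>))) has_integral
      revenue f tlo thi p + U0 + 0) {tlo..thi}"
    unfolding g_def
    using expected_rent_has_integral[OF expected_consumption_integrable[OF mech ic]
        expected_consumption_abs_le[OF mech]]
    by (rule has_integral_add)
  moreover have "p \<theta> * f \<theta> + U0 * f \<theta> + (integral {tlo..\<theta>} g * f \<theta> - g \<theta> * (1 - F \<theta>))
      = virtual_surplus q X \<theta> * f \<theta>" if "\<theta> \<in> {tlo..thi}" for \<theta>
  proof -
    have "virtual_surplus q X \<theta> * f \<theta> = q \<theta> * exp_util v (X \<theta>) \<theta> * f \<theta> - g \<theta> * (1 - F \<theta>)"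
      using density_pos[OF that] by (simp add: virtual_surplus_def g_def left_diff_distrib)
    moreover have "q \<theta> * exp_util v (X \<theta>) \<theta> = p \<theta> + U0 + integral {tlo..\<theta>} g"
      using indirect_utility_eq_integral[OF mech ic that]
      by (simp add: indirect_utility_def U0_def g_def)
    ultimately show ?thesis by (simp add: algebra_simps)
  qed
  ultimately have "((\<lambda>\<theta>. virtual_surplus q X \<theta> * f \<theta>) has_integral revenue f tlo thi p + U0 + 0) {tlo..thi}"
    by (rule has_integral_eq[rotated])
  then show ?thesis by (simp add: U0_def)
qed

lemma virtual_surplus_le:
  assumes mech: "mechanism tlo thi xlo xhi q X p" and \<theta>: "\<theta> \<in> {tlo..thi}"
  shows "virtual_surplus q X \<theta> \<le> v (consumption \<theta>) + virt F f \<theta> * consumption \<theta>"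
proof -
  note L = mechanism_lottery[OF mech \<theta>] and q = mechanism_prob[OF mech \<theta>]
  define h where "h = (1 - F \<theta>) / f \<theta>"
  have "(\<integral>y. util v y \<theta> - h * min y (xe v xhi \<theta>) \<partial>X \<theta>) \<le> v (consumption \<theta>) + virt F f \<theta> * consumption \<theta>"
  proof (rule lottery_integral_le[OF L])
    show "integrable (X \<theta>) (\<lambda>y. util v y \<theta> - h * min y (xe v xhi \<theta>))"
      using integrable_util[OF L] integrable_min_xe[OF L] by auto
    fix y assume "y \<in> {xlo..xhi}"
    then show "util v y \<theta> - h * min y (xe v xhi \<theta>) \<le> v (consumption \<theta>) + virt F f \<theta> * consumption \<theta>"
      using virtual_surplus_consumption_max[OF \<theta>] util_eq[of y \<theta>] allocs
      by (simp add: virt_def h_def algebra_simps)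
  qed
  then have "exp_util v (X \<theta>) \<theta> - h * (\<integral>y. min y (xe v xhi \<theta>) \<partial>X \<theta>)
      \<le> v (consumption \<theta>) + virt F f \<theta> * consumption \<theta>"
    using integrable_util[OF L] integrable_min_xe[OF L] by (simp add: exp_util_def)
  then have "q \<theta> * (exp_util v (X \<theta>) \<theta> - h * (\<integral>y. min y (xe v xhi \<theta>) \<partial>X \<theta>))
      \<le> q \<theta> * (v (consumption \<theta>) + virt F f \<theta> * consumption \<theta>)"
    using q by (intro mult_left_mono) auto
  then have "virtual_surplus q X \<theta> \<le> q \<theta> * (v (consumption \<theta>) + virt F f \<theta> * consumption \<theta>)"
    by (simp add: virtual_surplus_def expected_consumption_def h_def algebra_simps)
  also have "\<dots> \<le> v (consumption \<theta>) + virt F f \<theta> * consumption \<theta>"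
    using q virtual_surplus_consumption_nonneg[OF \<theta>] by (intro mult_left_le_one_le) auto
  finally show ?thesis .
qed

lemma virtual_surplus_opt:
  "virtual_surplus (\<lambda>_. 1) (\<lambda>\<theta>. return borel (xopt \<theta>)) \<theta> = v (consumption \<theta>) + virt F f \<theta> * consumption \<theta>"
proof -
  have "(\<integral>y. min y (xe v xhi \<theta>) \<partial>return borel (xopt \<theta>)) = consumption \<theta>"
    by (subst integral_return) (auto simp: consumption_def min.commute)
  then show ?thesis
    by (simp add: virtual_surplus_def expected_consumption_def exp_util_return util_xopt virt_def
        algebra_simps)
qed

theorem revenue_le_opt:
  assumes "mechanism tlo thi xlo xhi q X p" "IC v tlo thi q X p" "IR v tlo thi q X p"
  shows "revenue f tlo thi p \<le> revenue f tlo thi popt"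
proof -
  have "revenue f tlo thi p + indirect_utility q X p tlo \<le> revenue f tlo thi popt + 0"
  proof (rule has_integral_le[OF revenue_has_integral[OF assms(1,2)]])
    show "((\<lambda>\<theta>. virtual_surplus (\<lambda>_. 1) (\<lambda>\<theta>. return borel (xopt \<theta>)) \<theta> * f \<theta>) has_integral
        revenue f tlo thi popt + 0) {tlo..thi}"
      using revenue_has_integral[OF opt_mechanism opt_IC] payoff_opt[of tlo]
      by (simp add: indirect_utility_def exp_util_return)
    show "virtual_surplus q X \<theta> * f \<theta> \<le> virtual_surplus (\<lambda>_. 1) (\<lambda>\<theta>. return borel (xopt \<theta>)) \<theta> * f \<theta>"
      if "\<theta> \<in> {tlo..thi}" for \<theta>
      using virtual_surplus_le[OF assms(1) that] density_nonneg[OF that]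
      by (simp add: virtual_surplus_opt mult_right_mono)
  qed
  moreover have "0 \<le> indirect_utility q X p tlo"
    using assms(3) types unfolding IR_def indirect_utility_def by auto
  ultimately show ?thesis by simp
qed

end

theorem proposition1:
  fixes tlo thi xlo xhi m M :: real
    and v v' F f :: "real \<Rightarrow> real"
  assumes types: "tlo < thi"
    and allocs: "0 < xlo" "xlo < xhi"
    (* (A1) *)
    and A1_conc: "strictly_concave_on {0..xhi} v"
    and A1_deriv: "\<forall>x\<in>{0..xhi}. (v has_real_derivative v' x) (at x within {0..xhi})"
    and A1_C1: "continuous_on {0..xhi} v'"
    and A1_zero: "v 0 = 0"
    (* F is the CDF with density f on [tlo,thi] *)
    and dens_int: "f integrable_on {tlo..thi}"
    and cdf: "\<forall>\<theta>\<in>{tlo..thi}. F \<theta> = integral {tlo..\<theta>} f"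
    and cdf_top: "F thi = 1"
    (* (A2) *)
    and A2_bounds: "0 < m" "\<forall>\<theta>\<in>{tlo..thi}. m \<le> f \<theta> \<and> f \<theta> \<le> M"
    and A2_mono: "strict_mono_on {tlo..thi} (virt F f)"
    (* (A3) *)
    and A3: "0 < xe v xhi tlo" "xe v xhi tlo \<le> xlo"
    (* (A4) *)
    and A4: "\<forall>\<theta>\<in>{tlo..thi}. v (xe v xhi \<theta>) + virt F f \<theta> * xe v xhi \<theta> \<ge> 0"
  shows
    "mechanism tlo thi xlo xhi (\<lambda>_. 1) (\<lambda>\<theta>. return borel (xstar v F f xlo xhi \<theta>))
        (pstar v F f xlo xhi tlo)
     \<and> IC v tlo thi (\<lambda>_. 1) (\<lambda>\<theta>. return borel (xstar v F f xlo xhi \<theta>)) (pstar v F f xlo xhi tlo)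
     \<and> IR v tlo thi (\<lambda>_. 1) (\<lambda>\<theta>. return borel (xstar v F f xlo xhi \<theta>)) (pstar v F f xlo xhi tlo)
     \<and> (\<forall>q X p. mechanism tlo thi xlo xhi q X p \<and> IC v tlo thi q X p \<and> IR v tlo thi q X p
          \<longrightarrow> revenue f tlo thi p \<le> revenue f tlo thi (pstar v F f xlo xhi tlo))
     \<and> (\<forall>\<theta>\<in>{tlo..thi}. xa v (xstar v F f xlo xhi \<theta>) \<theta>
          = min (xe v xhi \<theta>) (xstar v F f xlo xhi \<theta>))"
proof -
  interpret screening v xhi tlo thi xlo M F f
  proof
    show "continuous_on {0..xhi} v"
      using A1_deriv by (auto simp: continuous_on_eq_continuous_within intro: DERIV_continuous)
  qed (use types allocs A1_conc dens_int cdf cdf_top A2_bounds A2_mono A4 in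
      \<open>auto intro: less_le_trans\<close>)
  have "\<forall>\<theta>\<in>{tlo..thi}. xa v (xstar v F f xlo xhi \<theta>) \<theta> = min (xe v xhi \<theta>) (xstar v F f xlo xhi \<theta>)"
    using xa_xopt by (simp add: consumption_def)
  then show ?thesis
    using opt_mechanism opt_IC opt_IR revenue_le_opt by blast
qed

end
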